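(* Let $a\ge 2$ be an integer, $p$ a prime and $n\ge 1$ an integer. Then $$N=\frac{a^{p^n}-1}{a^{p^{n-1}}-1}$$ is primover to base $a$ if and only if $\gcd\bigl(N,\,a^{p^{n-1}}-1\bigr)=1$.
   Context: For an integer $a>1$ and an odd integer $n>1$ with $\gcd(a,n)=1$: $h_a(n)$ denotes the multiplicative order of $a$ modulo $n$. A cyclotomic coset of $a$ modulo $n$ is a set of the form $\{\, s a^j \bmod n : j\ge 0\,\}$ with $s\in\{1,\dots,n-1\}$; these cosets partition $\{1,\dots,n-1\}$, and $r_a(n)$ denotes the number of distinct cyclotomic cosets of $a$ modulo $n$. An odd composite number $n$ coprime to $a$ is called an overpseudoprime to base $a$ if $n=r_a(n)\,h_a(n)+1$. An integer $N>1$ is called primover to base $a$ if it is either prime or an overpseudoprime to base $a$. *)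

theory Defs
  imports "HOL-Number_Theory.Number_Theory"
begin

definition h_ord :: "nat \<Rightarrow> nat \<Rightarrow> nat" where
  "h_ord a n = ord n a"

definition cyc_coset :: "nat \<Rightarrow> nat \<Rightarrow> nat \<Rightarrow> nat set" where
  "cyc_coset a n s = {(s * a ^ j) mod n | j. True}"

definition r_cos :: "nat \<Rightarrow> nat \<Rightarrow> nat" where
  "r_cos a n = card (cyc_coset a n ` {1..n-1})"

definition overpseudoprime :: "nat \<Rightarrow> nat \<Rightarrow> bool" where
  "overpseudoprime a n \<longleftrightarrow> odd n \<and> n > 1 \<and> \<not> prime n \<and> coprime a n
     \<and> n = r_cos a n * h_ord a n + 1"

definition primover :: "nat \<Rightarrow> nat \<Rightarrow> bool" where
  "primover a N \<longleftrightarrow> N > 1 \<and> (prime N \<or> overpseudoprime a N)"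

end

theory Submission
  imports Defs
begin

(* Write b = a^(p^m) and S = 1 + b + ... + b^(p-1), so that (b - 1) S = a^(p^(m+1)) - 1 and S is
   the quotient N of the theorem (with n = m + 1).  Since b = 1 (mod b - 1) we get S = p (mod b - 1),
   hence gcd (S, b - 1) = gcd (p, b - 1), which is 1 unless p divides b - 1.

   Two general criteria follow:
   - if every prime factor q of N satisfies ord q a = h, where a^h = 1 (mod N) and h >= 2, then every
     coset is full, N is odd and coprime to a, so N is primover;
   - if a = 1 modulo a prime divisor p < N of N but not modulo N, the coset of N/p is a singleton,
     so N is neither prime nor an overpseudoprime.
   For S: if p does not divide b - 1, every prime factor q of S has ord q a = p^(m+1) (it divides
   a^(p^(m+1)) - 1 but not b - 1), giving the first criterion; if p divides b - 1, then p divides S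
   and, by Fermat, a = b = 1 (mod p), giving the second. *)

section \<open>Cyclotomic cosets\<close>

lemma mult_pow_mod_ord:
  fixes a N s j :: nat
  assumes "coprime a N"
  shows "s * a ^ j mod N = s * a ^ (j mod ord N a) mod N"
proof -
  have "[a ^ j = a ^ (j mod ord N a)] (mod N)"
    using order_divides_expdiff[of N a j "j mod ord N a"] assms
    by (simp add: coprime_commute cong_def)
  then show ?thesis by (simp add: cong_def[symmetric] cong_scalar_left)
qed

lemma cyc_coset_eq_image:
  fixes a N s :: nat
  assumes "coprime a N"
  shows "cyc_coset a N s = (\<lambda>j. s * a ^ j mod N) ` {..<ord N a}"
proof -
  have "ord N a > 0" using assms by (simp add: coprime_commute)
  then have "s * a ^ j mod N \<in> (\<lambda>j. s * a ^ j mod N) ` {..<ord N a}" for j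
    using mult_pow_mod_ord[OF assms, of s j] by (intro image_eqI[of _ _ "j mod ord N a"]) auto
  then show ?thesis unfolding cyc_coset_def by auto
qed

lemma cyc_coset_finite_card_le:
  fixes a N s :: nat
  assumes "coprime a N"
  shows "finite (cyc_coset a N s)" and "card (cyc_coset a N s) \<le> ord N a"
  using card_image_le[of "{..<ord N a}" "\<lambda>j. s * a ^ j mod N"] cyc_coset_eq_image[OF assms]
  by auto

text \<open>Multiplication by powers of a unit keeps nonzero residues nonzero.\<close>
lemma cyc_coset_subset:
  fixes a N s :: nat
  assumes "coprime a N" and "s \<in> {1..N-1}"
  shows "cyc_coset a N s \<subseteq> {1..N-1}"
proof
  fix x assume "x \<in> cyc_coset a N s"
  then obtain j where x: "x = s * a ^ j mod N" unfolding cyc_coset_def by auto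
  have "\<not> N dvd s * a ^ j"
  proof
    assume "N dvd s * a ^ j"
    then have "N dvd s" using assms(1) by (simp add: coprime_commute coprime_dvd_mult_left_iff)
    then show False using assms(2) by (auto dest: dvd_imp_le)
  qed
  moreover have "0 < N" using assms(2) by (cases N) auto
  then have "x < N" using x by simp
  ultimately show "x \<in> {1..N-1}" using x by (auto simp: dvd_eq_mod_eq_0)
qed

lemma cyc_coset_self:
  fixes a N s :: nat
  assumes "s < N"
  shows "s \<in> cyc_coset a N s"
  unfolding cyc_coset_def using assms by (auto intro: exI[of _ 0])

lemma cyc_coset_eq_if_mem:
  fixes a N s x :: nat
  assumes cop: "coprime a N" and x: "x \<in> cyc_coset a N s"
  shows "cyc_coset a N x = cyc_coset a N s"
proof -
  let ?h = "ord N a"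
  obtain j where xj: "x = s * a ^ j mod N" using x unfolding cyc_coset_def by auto
  have shift: "x * a ^ k mod N = s * a ^ (j + k) mod N" for k
    by (simp add: xj mod_mult_left_eq power_add mult.assoc)
  have "s * a ^ k mod N \<in> cyc_coset a N x" for k
  proof -
    have "(j + (k + (?h - 1) * j)) mod ?h = k mod ?h"
    proof -
      have "?h > 0" using cop by (simp add: coprime_commute)
      then have "j + (k + (?h - 1) * j) = k + ?h * j" by (cases ?h) (auto simp: algebra_simps)
      then show ?thesis by (metis mod_mult_self2)
    qed
    then have "x * a ^ (k + (?h - 1) * j) mod N = s * a ^ k mod N"
      using mult_pow_mod_ord[OF cop, of s] by (metis shift)
    then show ?thesis unfolding cyc_coset_def by (metis (mono_tags, lifting) mem_Collect_eq)
  qed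
  then show ?thesis using shift unfolding cyc_coset_def by auto
qed

text \<open>The cosets partition \<open>{1..N-1}\<close>.\<close>
lemma sum_card_cyc_cosets:
  fixes a N :: nat
  assumes "coprime a N"
  shows "N - 1 = (\<Sum>C \<in> cyc_coset a N ` {1..N-1}. card C)"
proof -
  let ?A = "cyc_coset a N ` {1..N-1}"
  have union: "\<Union>?A = {1..N-1}"
  proof
    show "\<Union>?A \<subseteq> {1..N-1}" using cyc_coset_subset[OF assms] by blast
    have "s \<in> cyc_coset a N s" if "s \<in> {1..N-1}" for s
      using that by (intro cyc_coset_self) auto
    then show "{1..N-1} \<subseteq> \<Union>?A" by blast
  qed
  have disjoint: "pairwise disjnt ?A"
  proof (rule pairwiseI)
    fix X Y assume X: "X \<in> ?A" and Y: "Y \<in> ?A" and "X \<noteq> Y"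
    show "disjnt X Y" unfolding disjnt_def
    proof (rule equals0I)
      fix x assume "x \<in> X \<inter> Y"
      then have "cyc_coset a N x = X" "cyc_coset a N x = Y"
        using X Y cyc_coset_eq_if_mem[OF assms, of x] by auto
      then show False using \<open>X \<noteq> Y\<close> by simp
    qed
  qed
  have "card (\<Union>?A) = (\<Sum>C\<in>?A. card C)"
    using card_Union_disjoint[OF disjoint] cyc_coset_finite_card_le(1)[OF assms] by blast
  then show ?thesis using union by simp
qed

lemma overpseudo_equation_iff_full_cosets:
  fixes a N :: nat
  assumes "coprime a N" and "1 < N"
  shows "N = r_cos a N * h_ord a N + 1 \<longleftrightarrow>
         (\<forall>s \<in> {1..N-1}. card (cyc_coset a N s) = ord N a)"
proof -
  let ?A = "cyc_coset a N ` {1..N-1}"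
  have rh: "r_cos a N * h_ord a N = (\<Sum>C\<in>?A. ord N a)" by (simp add: r_cos_def h_ord_def)
  have le: "\<And>C. C \<in> ?A \<Longrightarrow> card C \<le> ord N a" using cyc_coset_finite_card_le(2)[OF assms(1)] by blast
  have "N = r_cos a N * h_ord a N + 1 \<longleftrightarrow> (\<Sum>C\<in>?A. card C) = (\<Sum>C\<in>?A. ord N a)"
    using sum_card_cyc_cosets[OF assms(1)] rh assms(2) by linarith
  also have "\<dots> \<longleftrightarrow> (\<forall>C \<in> ?A. card C = ord N a)"
  proof
    assume "(\<Sum>C\<in>?A. card C) = (\<Sum>C\<in>?A. ord N a)"
    then show "\<forall>C \<in> ?A. card C = ord N a" using sum_mono_inv[of card ?A "\<lambda>_. ord N a"] le by blast
  qed (rule sum.cong, auto)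
  finally show ?thesis by blast
qed

section \<open>Two criteria for being primover\<close>

lemma prime_factor_dvd_if_dvd_mult:
  fixes N s m :: nat
  assumes "N dvd s * m" and "0 < s" and "s < N"
  obtains q where "prime q" "q dvd N" "q dvd m"
proof -
  have "\<not> coprime N m"
  proof
    assume "coprime N m"
    then have "N dvd s" using assms(1) by (simp add: coprime_dvd_mult_left_iff)
    then show False using assms(2,3) by (auto dest: dvd_imp_le)
  qed
  then have "gcd N m \<noteq> 1" by blast
  then obtain q where "prime q" "q dvd gcd N m" using prime_factor_nat by blast
  then show ?thesis using that by simp
qed

lemma card_cyc_coset_full:
  fixes a N s :: nat
  assumes cop: "coprime a N" and s: "s \<in> {1..N-1}"
    and orders: "\<And>q. prime q \<Longrightarrow> q dvd N \<Longrightarrow> ord q a = ord N a"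
  shows "card (cyc_coset a N s) = ord N a"
proof -
  let ?h = "ord N a"
  have inj: "inj_on (\<lambda>j. s * a ^ j mod N) {..<?h}"
  proof (rule linorder_inj_onI')
    fix i j assume "i \<in> {..<?h}" "j \<in> {..<?h}" "i < j"
    define k where "k = j - i"
    then have k: "j = i + k" "0 < k" "k < ?h" using \<open>i < j\<close> \<open>j \<in> {..<?h}\<close> by auto
    show "s * a ^ i mod N \<noteq> s * a ^ j mod N"
    proof
      assume "s * a ^ i mod N = s * a ^ j mod N"
      then have "[a ^ i * s = a ^ i * (s * a ^ k)] (mod N)"
        by (simp add: cong_def k(1) power_add ac_simps)
      then have "[s * a ^ k = s] (mod N)"
        using cop by (simp add: cong_mult_lcancel_nat cong_sym_eq)
      moreover have "a ^ k \<ge> 1" using cop s by (cases "a = 0") (auto simp: Suc_le_eq)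
      ultimately have "N dvd s * (a ^ k - 1)" by (simp add: cong_altdef_nat diff_mult_distrib2)
      then obtain q where q: "prime q" "q dvd N" "q dvd a ^ k - 1"
        using s by (auto elim: prime_factor_dvd_if_dvd_mult)
      then have "[a ^ k = 1] (mod q)" using \<open>a ^ k \<ge> 1\<close> by (simp add: cong_altdef_nat)
      then have "ord q a dvd k" by (rule ord_divides[THEN iffD1])
      then have "?h dvd k" using orders[OF q(1,2)] by simp
      then show False using k by (auto dest: dvd_imp_le)
    qed
  qed
  then show ?thesis using card_image[OF inj] cyc_coset_eq_image[OF cop] by simp
qed

lemma primover_if_prime_factor_orders:
  fixes a N h :: nat
  assumes N: "1 < N" and h: "2 \<le> h" and pow: "[a ^ h = 1] (mod N)"
    and orders: "\<And>q. prime q \<Longrightarrow> q dvd N \<Longrightarrow> ord q a = h"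
  shows "primover a N"
proof -
  have cop: "coprime a N"
  proof (rule ccontr)
    assume "\<not> coprime a N"
    then have "gcd a N \<noteq> 1" by blast
    then obtain q where q: "prime q" "q dvd gcd a N" using prime_factor_nat by blast
    then have "\<not> coprime q a" using not_coprimeI[of q q a] not_prime_unit[of q] by auto
    then have "ord q a = 0" by (rule ord_not_coprime)
    then show False using orders[of q] q h by auto
  qed
  obtain q where q: "prime q" "q dvd N" using N prime_factor_nat[of N] by auto
  have "ord N a = h"
  proof (rule dvd_antisym)
    show "ord N a dvd h" using pow by (rule ord_divides[THEN iffD1])
    have "[a ^ ord N a = 1] (mod q)" using ord[of a N] q(2) by (rule cong_dvd_modulus_nat)
    then have "ord q a dvd ord N a" by (rule ord_divides[THEN iffD1])
    then show "h dvd ord N a" using orders[OF q] by simp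
  qed
  then have full: "\<forall>s \<in> {1..N-1}. card (cyc_coset a N s) = ord N a"
    using card_cyc_coset_full[OF cop] orders by metis
  have "odd N"
  proof
    assume "even N"
    then have two: "ord 2 a = h" using orders[OF two_is_prime_nat] by blast
    then have "coprime 2 a" using h ord_eq_0[of 2 a] by linarith
    then have "ord 2 a dvd totient 2" by (rule order_divides_totient)
    then have "ord 2 a dvd 1" by (simp add: totient_prime)
    then show False using two h by simp
  qed
  moreover have "N = r_cos a N * h_ord a N + 1"
    using full overpseudo_equation_iff_full_cosets[OF cop N] by blast
  ultimately show ?thesis using N cop unfolding primover_def overpseudoprime_def by blast
qed

lemma cyc_coset_singleton:
  fixes a N p :: nat
  assumes "p dvd N" and "1 < p" and "[a = 1] (mod p)"
  shows "cyc_coset a N (N div p) = {N div p}"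
proof -
  define s where "s = N div p"
  have N: "N = s * p" using assms(1) by (simp add: s_def)
  have "s * a ^ j mod N = s" for j
  proof -
    have "a ^ j mod p = 1" using cong_pow[OF assms(3), of j] assms(2) by (simp add: cong_def)
    then show ?thesis by (simp add: N mod_mult_mult1)
  qed
  then show ?thesis unfolding cyc_coset_def s_def[symmetric] by auto
qed

lemma not_primover_if_fixed_coset:
  fixes a N p :: nat
  assumes p: "prime p" "p dvd N" "p < N"
    and a_mod_p: "[a = 1] (mod p)" and a_mod_N: "\<not> [a = 1] (mod N)"
  shows "\<not> primover a N"
proof
  assume prim: "primover a N"
  have "\<not> prime N" using p by (metis prime_nat_iff prime_gt_1_nat less_not_refl)
  then have cop: "coprime a N" and N: "1 < N" and eq: "N = r_cos a N * h_ord a N + 1"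
    using prim unfolding primover_def overpseudoprime_def by blast+
  have "N div p \<in> {1..N-1}"
  proof -
    have "N div p < N" using p prime_gt_1_nat[OF p(1)] by (simp add: div_less_dividend)
    moreover have "0 < N div p" using p by (simp add: prime_gt_0_nat div_greater_zero_iff)
    ultimately show ?thesis by simp
  qed
  then have "card (cyc_coset a N (N div p)) = ord N a"
    using eq unfolding overpseudo_equation_iff_full_cosets[OF cop N] by blast
  then have "ord N a = 1"
    using cyc_coset_singleton[OF p(2) prime_gt_1_nat[OF p(1)] a_mod_p] by simp
  then show False using a_mod_N ord_eq_Suc_0_iff by simp
qed

section \<open>The values of the cyclotomic polynomials of prime power index\<close>

text \<open>\<open>phi_pp a p m = 1 + b + \<dots> + b^(p-1)\<close> with \<open>b = a^(p^m)\<close>; for prime p this is the value of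
  the \<open>p^(m+1)\<close>-th cyclotomic polynomial at a.\<close>
definition phi_pp :: "nat \<Rightarrow> nat \<Rightarrow> nat \<Rightarrow> nat" where
  "phi_pp a p m = (\<Sum>i<p. (a ^ p ^ m) ^ i)"

text \<open>The geometric sum identity in the natural numbers (also valid for \<open>b = 0\<close>).\<close>
lemma nat_geometric_sum:
  fixes b k :: nat
  shows "(b - 1) * (\<Sum>i<k. b ^ i) = b ^ k - 1"
proof (cases "b = 0")
  case False
  have "int ((b - 1) * (\<Sum>i<k. b ^ i)) = (int b - 1) * (\<Sum>i<k. int b ^ i)"
    using False by (simp add: of_nat_diff)
  also have "\<dots> = int b ^ k - 1" by (rule power_diff_1_eq[symmetric])
  also have "\<dots> = int (b ^ k - 1)" using False by (simp add: of_nat_diff Suc_le_eq)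
  finally show ?thesis by (rule of_nat_eq_iff[THEN iffD1])
qed (cases k, simp_all)

lemma phi_pp_mult:
  fixes a p m :: nat
  shows "(a ^ p ^ m - 1) * phi_pp a p m = a ^ p ^ Suc m - 1"
proof -
  have "a ^ p ^ Suc m = (a ^ p ^ m) ^ p" by (metis power_Suc2 power_mult)
  then show ?thesis unfolding phi_pp_def by (simp only: nat_geometric_sum)
qed

text \<open>Since \<open>b = 1 (mod b - 1)\<close>, the sum of p powers of b is p modulo \<open>b - 1\<close>.\<close>
lemma phi_pp_cong:
  fixes a p m :: nat
  assumes "0 < a"
  shows "[phi_pp a p m = p] (mod (a ^ p ^ m - 1))"
proof -
  have b: "[a ^ p ^ m = 1] (mod (a ^ p ^ m - 1))"
    using assms by (simp add: cong_altdef_nat Suc_le_eq)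
  have "[phi_pp a p m = (\<Sum>i<p. 1)] (mod (a ^ p ^ m - 1))"
    unfolding phi_pp_def by (rule cong_sum) (use cong_pow[OF b] in simp)
  then show ?thesis by simp
qed

lemma phi_pp_gt:
  fixes a p m :: nat
  assumes "2 \<le> a" and "2 \<le> p"
  shows "p < phi_pp a p m" and "a ^ p ^ m < phi_pp a p m"
proof -
  let ?b = "a ^ p ^ m"
  have "0 < p ^ m" using assms(2) by simp
  then have b2: "2 \<le> ?b" using assms(1) self_le_power[of a "p ^ m"] by linarith
  have "(\<Sum>i<p. (1::nat)) < (\<Sum>i<p. ?b ^ i)"
  proof (rule sum_strict_mono_ex1)
    show "\<forall>i\<in>{..<p}. 1 \<le> ?b ^ i" using b2 by simp
    show "\<exists>i\<in>{..<p}. 1 < ?b ^ i" using assms(2) b2 by (intro bexI[of _ 1]) auto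
  qed simp
  then show "p < phi_pp a p m" by (simp add: phi_pp_def)
  have "(\<Sum>i\<in>{0,1}. ?b ^ i) \<le> (\<Sum>i<p. ?b ^ i)"
    by (rule sum_mono2) (use assms(2) in auto)
  then show "?b < phi_pp a p m" by (simp add: phi_pp_def)
qed

lemma fermat_prime_power:
  fixes a p k :: nat
  assumes "prime p"
  shows "[a ^ (p ^ k) = a] (mod p)"
proof (induction k)
  case (Suc k)
  have fermat: "[x ^ p = x] (mod p)" for x :: nat
  proof (cases "p dvd x")
    case True
    moreover have "x dvd x ^ p" using prime_gt_0_nat[OF assms] by simp
    ultimately have "p dvd x ^ p" by (rule dvd_trans)
    then show ?thesis using True by (simp add: cong_def dvd_eq_mod_eq_0)
  next
    case False
    have "[x * x ^ (p - 1) = x * 1] (mod p)" using fermat_theorem[OF assms False] by (rule cong_scalar_left)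
    then show ?thesis using prime_gt_0_nat[OF assms] by (simp add: power_eq_if)
  qed
  have "a ^ (p ^ Suc k) = (a ^ (p ^ k)) ^ p" by (metis power_Suc2 power_mult)
  also have "[(a ^ (p ^ k)) ^ p = a ^ (p ^ k)] (mod p)" by (rule fermat)
  finally show ?case using Suc.IH by (rule cong_trans)
qed simp

lemma ord_eq_prime_power:
  fixes a q p m :: nat
  assumes "prime p" and "[a ^ p ^ Suc m = 1] (mod q)" and "\<not> [a ^ p ^ m = 1] (mod q)"
  shows "ord q a = p ^ Suc m"
proof -
  have "ord q a dvd p ^ Suc m" using assms(2) by (rule ord_divides[THEN iffD1])
  then obtain i where i: "i \<le> Suc m" "ord q a = p ^ i"
    using divides_primepow_nat[OF assms(1)] by blast
  have "\<not> i \<le> m"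
  proof
    assume "i \<le> m"
    then have "ord q a dvd p ^ m" using i(2) by (simp add: le_imp_power_dvd)
    then show False using assms(3) ord_divides by blast
  qed
  then have "i = Suc m" using i(1) by simp
  then show ?thesis using i(2) by simp
qed

text \<open>If p divides \<open>b - 1\<close>, the value is not primover (second criterion with the prime p).\<close>
lemma phi_pp_not_primover:
  fixes a p m :: nat
  assumes a: "2 \<le> a" and p: "prime p" and p_dvd: "p dvd a ^ p ^ m - 1"
  shows "\<not> primover a (phi_pp a p m)"
proof (rule not_primover_if_fixed_coset[OF p])
  let ?b = "a ^ p ^ m"
  have "[phi_pp a p m = p] (mod p)" using phi_pp_cong[of a p m] p_dvd a by (simp add: cong_dvd_modulus_nat)
  then show "p dvd phi_pp a p m" by (simp add: cong_def dvd_eq_mod_eq_0)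
  show "p < phi_pp a p m" using phi_pp_gt a prime_ge_2_nat[OF p] by blast
  have "[?b = 1] (mod p)" using p_dvd a by (simp add: cong_altdef_nat)
  then show "[a = 1] (mod p)" using fermat_prime_power[OF p] by (metis cong_sym cong_trans)
  have "a \<le> ?b" using a p by (simp add: self_le_power prime_gt_0_nat)
  then have less: "a - 1 < phi_pp a p m" using phi_pp_gt(2)[OF a prime_ge_2_nat[OF p], of m] by linarith
  show "\<not> [a = 1] (mod phi_pp a p m)"
  proof
    assume "[a = 1] (mod phi_pp a p m)"
    then have "phi_pp a p m dvd a - 1" using a by (simp add: cong_altdef_nat)
    moreover have "0 < a - 1" using a by simp
    ultimately show False using less by (auto dest: dvd_imp_le)
  qed
qed

text \<open>If p does not divide \<open>b - 1\<close>, the value is primover (first criterion with \<open>h = p^(m+1)\<close>).\<close>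
lemma phi_pp_primover:
  fixes a p m :: nat
  assumes a: "2 \<le> a" and p: "prime p" and p_ndvd: "\<not> p dvd a ^ p ^ m - 1"
  shows "primover a (phi_pp a p m)"
proof (rule primover_if_prime_factor_orders)
  let ?S = "phi_pp a p m"
  have p2: "2 \<le> p" using prime_ge_2_nat[OF p] .
  show "1 < ?S" using phi_pp_gt(1)[OF a p2, of m] p2 by linarith
  have "p \<le> p ^ Suc m" using p2 by (simp only: self_le_power zero_less_Suc)
  then show "2 \<le> p ^ Suc m" using p2 by linarith
  have one: "1 \<le> a ^ k" for k using a by simp
  have "?S dvd a ^ p ^ Suc m - 1" unfolding phi_pp_mult[symmetric] by simp
  then show pow: "[a ^ p ^ Suc m = 1] (mod ?S)" using one by (simp add: cong_altdef_nat)
  have "gcd ?S (a ^ p ^ m - 1) = gcd p (a ^ p ^ m - 1)"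
    using a by (intro cong_gcd_eq phi_pp_cong) simp
  then have gcd1: "gcd ?S (a ^ p ^ m - 1) = 1" using prime_imp_coprime[OF p p_ndvd] by simp
  fix q assume q: "prime q" "q dvd ?S"
  show "ord q a = p ^ Suc m"
  proof (rule ord_eq_prime_power[OF p])
    show "[a ^ p ^ Suc m = 1] (mod q)" using pow q(2) by (rule cong_dvd_modulus_nat)
    show "\<not> [a ^ p ^ m = 1] (mod q)"
    proof
      assume "[a ^ p ^ m = 1] (mod q)"
      then have "q dvd gcd ?S (a ^ p ^ m - 1)" using q one by (simp add: cong_altdef_nat)
      then have "q dvd 1" by (simp only: gcd1)
      then show False using q(1) by simp
    qed
  qed
qed

theorem theorem7:
  fixes a p n :: nat
  assumes "a \<ge> 2" and "prime p" and "n \<ge> 1"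
  shows "primover a ((a ^ (p ^ n) - 1) div (a ^ (p ^ (n - 1)) - 1))
     \<longleftrightarrow> gcd ((a ^ (p ^ n) - 1) div (a ^ (p ^ (n - 1)) - 1)) (a ^ (p ^ (n - 1)) - 1) = 1"
proof -
  obtain m where n: "n = Suc m" using assms(3) by (cases n) auto
  have "a \<le> a ^ p ^ m" using assms(1,2) by (simp add: self_le_power prime_gt_0_nat)
  then have "0 < a ^ p ^ m - 1" using assms(1) by linarith
  moreover have "a ^ p ^ n - 1 = (a ^ p ^ m - 1) * phi_pp a p m" using phi_pp_mult n by simp
  ultimately have quotient: "(a ^ (p ^ n) - 1) div (a ^ (p ^ (n - 1)) - 1) = phi_pp a p m"
    using n by simp
  have gcd: "gcd (phi_pp a p m) (a ^ p ^ m - 1) = gcd p (a ^ p ^ m - 1)"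
    using assms(1) by (intro cong_gcd_eq phi_pp_cong) simp
  show ?thesis
  proof (cases "p dvd a ^ p ^ m - 1")
    case True
    then have "gcd p (a ^ p ^ m - 1) = p" by (rule gcd_nat.absorb1)
    then have "gcd p (a ^ p ^ m - 1) \<noteq> 1" using prime_gt_1_nat[OF assms(2)] by simp
    then show ?thesis using phi_pp_not_primover[OF assms(1,2) True] quotient gcd n by simp
  next
    case False
    then have "coprime p (a ^ p ^ m - 1)" using assms(2) by (rule prime_imp_coprime[rotated])
    then have "gcd p (a ^ p ^ m - 1) = 1" by simp
    then show ?thesis using phi_pp_primover[OF assms(1,2) False] quotient gcd n by simp
  qed
qed

end
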